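(* Let $\beta_{\mathtt{H}},\beta_{\mathtt{L}},\gamma_{\mathtt{H}},\gamma_{\mathtt{L}}>0$ with $\beta_{\mathtt{H}}/\gamma_{\mathtt{H}}>\beta_{\mathtt{L}}/\gamma_{\mathtt{L}}$ and $\beta_{\mathtt{H}}>\beta_{\mathtt{L}}$, let $q_{\mathtt{HL}},q_{\mathtt{LH}}\ge 0$, $\alpha\in(0,1)$, and fix $z_{\mathtt{S}}\in[0,1]$. Set $\hat\beta_{\mathtt{Q}}:=\beta_{\mathtt{Q}}(\alpha z_{\mathtt{S}}+1-z_{\mathtt{S}})$ for $\mathtt{Q}\in\{\mathtt{H},\mathtt{L}\}$ and consider, on $\{(\mathtt{I}_{\mathtt{H}},\mathtt{I}_{\mathtt{L}})\in[0,1]^2:\mathtt{I}_{\mathtt{H}}+\mathtt{I}_{\mathtt{L}}\le 1\}$ (with $\mathtt{S}=1-\mathtt{I}_{\mathtt{H}}-\mathtt{I}_{\mathtt{L}}$), the dynamics \begin{align*} \dot{\mathtt{I}}_{\mathtt{H}}&=\hat\beta_{\mathtt{H}}\mathtt{I}_{\mathtt{H}}(1-\mathtt{I}_{\mathtt{H}}-\mathtt{I}_{\mathtt{L}})+q_{\mathtt{LH}}\mathtt{I}_{\mathtt{L}}-(q_{\mathtt{HL}}+\gamma_{\mathtt{H}})\mathtt{I}_{\mathtt{H}},\\ \dot{\mathtt{I}}_{\mathtt{L}}&=\hat\beta_{\mathtt{L}}\mathtt{I}_{\mathtt{L}}(1-\mathtt{I}_{\mathtt{H}}-\mathtt{I}_{\mathtt{L}})+q_{\mathtt{HL}}\mathtt{I}_{\mathtt{H}}-(q_{\mathtt{LH}}+\gamma_{\mathtt{L}})\mathtt{I}_{\mathtt{L}}.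 \end{align*} Let $B=\mathrm{diag}(\hat\beta_{\mathtt{H}},\hat\beta_{\mathtt{L}})$, $D=\mathrm{diag}(\gamma_{\mathtt{H}}+q_{\mathtt{HL}},\gamma_{\mathtt{L}}+q_{\mathtt{LH}})$ and $M=\begin{bmatrix}0&q_{\mathtt{LH}}\\ q_{\mathtt{HL}}&0\end{bmatrix}$. Then the disease-free equilibrium $(\mathtt{S},\mathtt{I}_{\mathtt{H}},\mathtt{I}_{\mathtt{L}})=(1,0,0)$ is globally asymptotically stable if and only if $\rho(D^{-1}(B+M))\le 1$.
   Context: $\rho(A)$ denotes the spectral radius of a square matrix $A$ (maximum modulus of its eigenvalues). The model is a bi-virus SIS epidemic with strains $\mathtt{H}$ and $\mathtt{L}$: $\mathtt{I}_{\mathtt{H}},\mathtt{I}_{\mathtt{L}}$ are fractions infected by each strain, $\beta$'s transmission rates, $\gamma$'s recovery rates, $q_{\mathtt{HL}},q_{\mathtt{LH}}$ mutation rates between strains, $z_{\mathtt{S}}$ the fraction of susceptibles adopting protection, which scales infection rates by $\alpha$. *)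

theory Defs
  imports "HOL-Analysis.Analysis"
begin

definition cmat :: "real^'n^'n \<Rightarrow> complex^'n^'n" where
  "cmat A = (\<chi> i j. complex_of_real (A $ i $ j))"

definition spectral_radius :: "real^'n^'n \<Rightarrow> real" where
  "spectral_radius A = Max (cmod ` {l::complex. det (cmat A - mat l) = 0})"

text \<open>2x2 matrices indexed by type 2; index 1 is strain H, index 2 is strain L.\<close>
definition diag2 :: "real \<Rightarrow> real \<Rightarrow> real^2^2" where
  "diag2 a b = (\<chi> i j. if i = j then (if i = 1 then a else b) else 0)"

definition offdiag2 :: "real \<Rightarrow> real \<Rightarrow> real^2^2" where
  "offdiag2 a b = (\<chi> i j. if i = j then 0 else (if i = 1 then a else b))"

definition bivirus_field ::
  "real \<Rightarrow> real \<Rightarrow> real \<Rightarrow> real \<Rightarrow> real \<Rightarrow> real \<Rightarrow> real \<times> real \<Rightarrow> real \<times> real" where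
  "bivirus_field bH bL gH gL qHL qLH = (\<lambda>(iH, iL).
     (bH * iH * (1 - iH - iL) + qLH * iL - (qHL + gH) * iH,
      bL * iL * (1 - iH - iL) + qHL * iH - (qLH + gL) * iL))"

definition simplex2 :: "(real \<times> real) set" where
  "simplex2 = {(iH, iL). 0 \<le> iH \<and> iH \<le> 1 \<and> 0 \<le> iL \<and> iL \<le> 1 \<and> iH + iL \<le> 1}"

definition is_solution :: "('a::real_normed_vector \<Rightarrow> 'a) \<Rightarrow> 'a set \<Rightarrow> (real \<Rightarrow> 'a) \<Rightarrow> bool" where
  "is_solution f X x \<longleftrightarrow> x 0 \<in> X \<and>
     (\<forall>t\<ge>0. (x has_vector_derivative f (x t)) (at t within {0..}))"

definition globally_asymptotically_stable ::
  "('a::real_normed_vector \<Rightarrow> 'a) \<Rightarrow> 'a set \<Rightarrow> 'a \<Rightarrow> bool" where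
  "globally_asymptotically_stable f X e \<longleftrightarrow>
     e \<in> X \<and> f e = 0 \<and>
     (\<forall>\<epsilon>>0. \<exists>\<delta>>0. \<forall>x. is_solution f X x \<and> dist (x 0) e < \<delta> \<longrightarrow>
         (\<forall>t\<ge>0. dist (x t) e < \<epsilon>)) \<and>
     (\<forall>x. is_solution f X x \<longrightarrow> (x \<longlongrightarrow> e) at_top)"

end

(*
  Write dH = gH + qHL, dL = gL + qLH and bH, bL for the effective infection rates. The matrix
  D^-1 (B + M) is a nonnegative 2x2 matrix, so its spectral radius is the larger root of its
  characteristic polynomial, and it is at most 1 iff bH <= dH, bL <= dL and
  qLH qHL <= (dH - bH) (dL - bL).

  If this threshold condition fails, (dH - s bH) (dL - s bL) - qLH qHL has a root s in (0, 1),
  which is the susceptible fraction of an endemic equilibrium; the constant solution through it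
  does not tend to the disease-free state.

  If it holds, solutions stay in the nonnegative quadrant, and with a = dH - bH, b = dL - bL the
  linear function V = (b + qHL) I_H + (a + qLH) I_L satisfies V' <= - c V^2 for some c > 0, so V
  decreases to 0. When a + qLH = 0 this function only sees I_H; then I_H' <= - bH I_H^2 and
  I_L' <= qHL I_H - bL I_L^2 give the same conclusion one component at a time.
*)

theory Submission
  imports Defs
begin

section \<open>Spectral radius of the next-generation matrix\<close>

lemma matrix_inv_eqI:
  fixes A B :: "'a::semiring_1^'n^'n"
  assumes "A ** B = mat 1" "B ** A = mat 1"
  shows "matrix_inv A = B"
proof -
  have inv: "A ** matrix_inv A = mat 1 \<and> matrix_inv A ** A = mat 1"
    unfolding matrix_inv_def by (rule someI) (use assms in blast)
  have "B = (matrix_inv A ** A) ** B"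
    using inv by simp
  also have "\<dots> = matrix_inv A"
    by (simp add: assms(1) flip: matrix_mul_assoc)
  finally show ?thesis ..
qed

lemma matrix_inv_diag2:
  assumes "a \<noteq> 0" "b \<noteq> 0"
  shows "matrix_inv (diag2 a b) = diag2 (1/a) (1/b)"
  by (rule matrix_inv_eqI)
    (use assms in \<open>auto simp: matrix_matrix_mult_def diag2_def mat_def vec_eq_iff sum_2 forall_2\<close>)

lemma spectral_radius_2x2:
  fixes N :: "real^2^2"
  assumes "N$1$2 * N$2$1 \<ge> 0" "N$1$1 + N$2$2 \<ge> 0"
  shows "spectral_radius N
    = (N$1$1 + N$2$2 + sqrt ((N$1$1 - N$2$2)^2 + 4 * (N$1$2 * N$2$1))) / 2"
proof -
  define r where "r = sqrt ((N$1$1 - N$2$2)^2 + 4 * (N$1$2 * N$2$1))"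
  define l1 where "l1 = (N$1$1 + N$2$2 + r) / 2"
  define l2 where "l2 = (N$1$1 + N$2$2 - r) / 2"
  have "r^2 = (N$1$1 - N$2$2)^2 + 4 * (N$1$2 * N$2$1)"
    unfolding r_def using assms(1) by simp
  then have sum: "l1 + l2 = N$1$1 + N$2$2"
    and prod: "l1 * l2 = N$1$1 * N$2$2 - N$1$2 * N$2$1"
    unfolding l1_def l2_def by (simp_all add: field_simps power2_eq_square)
  have "det (cmat N - mat l) = l * l - l * of_real (l1 + l2) + of_real (l1 * l2)" for l
    unfolding sum prod by (simp add: det_2 cmat_def mat_def algebra_simps)
  also have "\<dots> l = (l - of_real l1) * (l - of_real l2)" for l
    by (simp add: algebra_simps)
  finally have roots: "{l. det (cmat N - mat l) = 0} = {of_real l1, of_real l2}"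
    by auto
  have "0 \<le> r"
    unfolding r_def using assms(1) by simp
  then have "\<bar>l2\<bar> \<le> l1"
    unfolding l1_def l2_def using assms(2) by (simp add: abs_le_iff)
  moreover have "0 \<le> l1"
    unfolding l1_def using assms(2) \<open>0 \<le> r\<close> by simp
  ultimately have "Max (cmod ` {of_real l1, of_real l2}) = l1"
    by (simp add: max_def)
  then show ?thesis
    unfolding spectral_radius_def roots l1_def r_def .
qed

lemma perron_root_le_1_iff:
  fixes p s r :: real
  assumes "0 \<le> p" "0 \<le> s" "0 \<le> r"
  shows "(p + s + sqrt ((p - s)^2 + 4 * r)) / 2 \<le> 1 \<longleftrightarrow> p \<le> 1 \<and> s \<le> 1 \<and> r \<le> (1 - p) * (1 - s)"
proof -
  have "(p + s + sqrt ((p - s)^2 + 4 * r)) / 2 \<le> 1 \<longleftrightarrow> sqrt ((p - s)^2 + 4 * r) \<le> 2 - p - s"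
    by auto
  also have "\<dots> \<longleftrightarrow> 0 \<le> 2 - p - s \<and> (p - s)^2 + 4 * r \<le> (2 - p - s)^2"
  proof
    assume le: "sqrt ((p - s)^2 + 4 * r) \<le> 2 - p - s"
    moreover have "0 \<le> sqrt ((p - s)^2 + 4 * r)"
      using assms(3) by simp
    ultimately show "0 \<le> 2 - p - s \<and> (p - s)^2 + 4 * r \<le> (2 - p - s)^2"
      using sqrt_le_D[OF le] by linarith
  qed (simp add: real_le_lsqrt)
  also have "\<dots> \<longleftrightarrow> 0 \<le> 2 - p - s \<and> r \<le> (1 - p) * (1 - s)"
    by (auto simp: power2_eq_square algebra_simps)
  also have "\<dots> \<longleftrightarrow> p \<le> 1 \<and> s \<le> 1 \<and> r \<le> (1 - p) * (1 - s)"
    using assms(3) zero_le_mult_iff[of "1 - p" "1 - s"] by auto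
  finally show ?thesis .
qed

lemma spectral_radius_threshold_iff:
  fixes dH dL bH bL qLH qHL :: real
  assumes "0 < dH" "0 < dL" "0 \<le> bH" "0 \<le> bL" "0 \<le> qLH" "0 \<le> qHL"
  shows "spectral_radius (matrix_inv (diag2 dH dL) ** (diag2 bH bL + offdiag2 qLH qHL)) \<le> 1
    \<longleftrightarrow> bH \<le> dH \<and> bL \<le> dL \<and> qLH * qHL \<le> (dH - bH) * (dL - bL)"
proof -
  define N where "N = matrix_inv (diag2 dH dL) ** (diag2 bH bL + offdiag2 qLH qHL)"
  have "dH \<noteq> 0" "dL \<noteq> 0"
    using assms(1,2) by simp_all
  then have N: "N$1$1 = bH / dH" "N$1$2 = qLH / dH" "N$2$1 = qHL / dL" "N$2$2 = bL / dL"
    unfolding N_def matrix_inv_diag2[OF \<open>dH \<noteq> 0\<close> \<open>dL \<noteq> 0\<close>]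
    by (simp_all add: matrix_matrix_mult_def diag2_def offdiag2_def sum_2)
  have "spectral_radius N \<le> 1 \<longleftrightarrow>
      bH / dH \<le> 1 \<and> bL / dL \<le> 1 \<and> qLH * qHL / (dH * dL) \<le> (1 - bH / dH) * (1 - bL / dL)"
    using assms perron_root_le_1_iff[of "bH / dH" "bL / dL" "qLH * qHL / (dH * dL)"]
    by (simp add: spectral_radius_2x2 N)
  also have "(1 - bH / dH) * (1 - bL / dL) = (dH - bH) * (dL - bL) / (dH * dL)"
    using assms(1,2) by (simp add: field_simps)
  finally show ?thesis
    unfolding N_def using assms(1,2) by (simp add: divide_le_cancel mult_less_0_iff)
qed

section \<open>Scalar differential inequalities\<close>

lemma has_real_derivative_pos_part_sq:
  "((\<lambda>y::real. (max y 0)^2) has_real_derivative 2 * max x 0) (at x)"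
proof (cases x "0::real" rule: linorder_cases)
  case less
  have "((\<lambda>y::real. 0) has_real_derivative 0) (at x)"
    by simp
  then have "((\<lambda>y::real. (max y 0)^2) has_real_derivative 0) (at x)"
    by (rule has_field_derivative_transform_within_open[of _ _ _ "{..<0}"]) (use less in auto)
  then show ?thesis
    using less by simp
next
  case greater
  have "((\<lambda>y::real. y^2) has_real_derivative 2 * x) (at x)"
    by (auto intro!: derivative_eq_intros)
  then have "((\<lambda>y::real. (max y 0)^2) has_real_derivative 2 * x) (at x)"
    by (rule has_field_derivative_transform_within_open[of _ _ _ "{0<..}"]) (use greater in auto)
  then show ?thesis
    using greater by simp
next
  case equal
  have "((\<lambda>y::real. max y 0) \<longlongrightarrow> max 0 0) (at 0)"
    by (intro tendsto_max tendsto_ident_at tendsto_const)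
  moreover have "\<forall>\<^sub>F y in at (0::real). max y 0 = ((max y 0)^2 - (max 0 0)^2) / (y - 0)"
    by (simp add: eventually_at_filter max_def power2_eq_square)
  ultimately have "((\<lambda>y. ((max y 0)^2 - (max 0 0)^2) / (y - 0)) \<longlongrightarrow> 0) (at (0::real))"
    by (simp add: tendsto_cong)
  then show ?thesis
    using equal by (simp add: has_field_derivative_iff)
qed

lemma DERIV_nonpos_imp_decreasing_within:
  fixes f f' :: "real \<Rightarrow> real"
  assumes "a \<le> b" "{a..b} \<subseteq> S"
    and der: "\<And>t. t \<in> {a..b} \<Longrightarrow> (f has_real_derivative f' t) (at t within S)"
    and nonpos: "\<And>t. t \<in> {a..b} \<Longrightarrow> f' t \<le> 0"
  shows "f b \<le> f a"
proof -
  have der': "(f has_real_derivative f' t) (at t within {a..b})" if "t \<in> {a..b}" for t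
    using DERIV_subset[OF der[OF that] assms(2)] .
  show ?thesis
  proof (rule DERIV_nonpos_imp_decreasing_open[OF assms(1)])
    fix t assume "a < t" "t < b"
    then show "\<exists>y. (f has_real_derivative y) (at t) \<and> y \<le> 0"
      using der'[of t] nonpos[of t] by (auto simp: at_within_Icc_at)
  qed (rule DERIV_continuous_on[OF der'])
qed

lemma gronwall_exp_bound:
  fixes \<phi> \<phi>' :: "real \<Rightarrow> real"
  assumes "a \<le> b" "{a..b} \<subseteq> S"
    and der: "\<And>t. t \<in> {a..b} \<Longrightarrow> (\<phi> has_real_derivative \<phi>' t) (at t within S)"
    and growth: "\<And>t. t \<in> {a..b} \<Longrightarrow> \<phi>' t \<le> K * \<phi> t"
  shows "\<phi> b \<le> exp (K * (b - a)) * \<phi> a"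
proof -
  have "exp (- K * b) * \<phi> b \<le> exp (- K * a) * \<phi> a"
  proof (rule DERIV_nonpos_imp_decreasing_within[OF assms(1,2)])
    fix t assume t: "t \<in> {a..b}"
    show "((\<lambda>t. exp (- K * t) * \<phi> t) has_real_derivative exp (- K * t) * (\<phi>' t - K * \<phi> t))
        (at t within S)"
      using der[OF t] by (auto intro!: derivative_eq_intros simp: algebra_simps)
    show "exp (- K * t) * (\<phi>' t - K * \<phi> t) \<le> 0"
      using growth[OF t] by (simp add: mult_nonneg_nonpos)
  qed
  then have "exp (K * b) * (exp (- K * b) * \<phi> b) \<le> exp (K * b) * (exp (- K * a) * \<phi> a)"
    by simp
  moreover have "exp (K * b) * (exp (- K * b) * \<phi> b) = \<phi> b"
    by (simp add: mult.assoc[symmetric] exp_add[symmetric])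
  moreover have "exp (K * b) * (exp (- K * a) * \<phi> a) = exp (K * (b - a)) * \<phi> a"
    by (simp add: mult.assoc[symmetric] exp_add[symmetric] right_diff_distrib)
  ultimately show ?thesis
    by linarith
qed

lemma neg_part_sq_growth:
  fixes u v \<alpha> p K :: real
  assumes "\<bar>\<alpha>\<bar> \<le> K" "0 \<le> p"
  shows "2 * max (- u) 0 * - (\<alpha> * u + p * v)
    \<le> (2 * K + p) * (max (- u) 0)^2 + p * (max (- v) 0)^2"
proof (cases "0 \<le> u")
  case True
  then show ?thesis
    using assms by simp
next
  case False
  have "\<alpha> * u^2 \<le> K * u^2"
    using assms(1) by (intro mult_right_mono) auto
  moreover have "2 * (u * v) \<le> u^2 + (max (- v) 0)^2"
  proof (cases "0 \<le> v")
    case True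
    with False have "u * v \<le> 0"
      by (simp add: mult_nonpos_nonneg)
    moreover have "0 \<le> u^2 + (max (- v) 0)^2"
      by simp
    ultimately show ?thesis
      by linarith
  next
    case False
    then show ?thesis
      using sum_squares_bound[of u v] by (simp add: power2_eq_square)
  qed
  then have "p * (2 * (u * v)) \<le> p * (u^2 + (max (- v) 0)^2)"
    using assms(2) by (rule mult_left_mono)
  moreover have "2 * max (- u) 0 * - (\<alpha> * u + p * v) = 2 * (\<alpha> * u^2) + p * (2 * (u * v))"
    using False by (simp add: power2_eq_square algebra_simps)
  moreover have "(2 * K + p) * (max (- u) 0)^2 + p * (max (- v) 0)^2
      = 2 * (K * u^2) + p * (u^2 + (max (- v) 0)^2)"
    using False by (simp add: algebra_simps)
  ultimately show ?thesis
    by linarith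
qed

lemma cooperative_system_nonneg:
  fixes u v \<alpha> \<beta> :: "real \<Rightarrow> real" and p q T :: real
  assumes "0 \<le> p" "0 \<le> q" "0 \<le> T" "0 \<le> u 0" "0 \<le> v 0"
    and "continuous_on {0..T} \<alpha>" "continuous_on {0..T} \<beta>"
    and du: "\<And>t. t \<in> {0..T} \<Longrightarrow> (u has_real_derivative \<alpha> t * u t + p * v t) (at t within {0..})"
    and dv: "\<And>t. t \<in> {0..T} \<Longrightarrow> (v has_real_derivative \<beta> t * v t + q * u t) (at t within {0..})"
  shows "0 \<le> u T \<and> 0 \<le> v T"
proof -
  obtain K\<alpha> where K\<alpha>: "\<And>t. t \<in> {0..T} \<Longrightarrow> \<bar>\<alpha> t\<bar> \<le> K\<alpha>"
    using continuous_on_compact_bound[OF compact_Icc assms(6)] by auto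
  obtain K\<beta> where K\<beta>: "\<And>t. t \<in> {0..T} \<Longrightarrow> \<bar>\<beta> t\<bar> \<le> K\<beta>"
    using continuous_on_compact_bound[OF compact_Icc assms(7)] by auto
  define K where "K = 2 * max K\<alpha> K\<beta> + p + q"
  \<comment> \<open>The squared distance to the nonnegative quadrant grows at most exponentially
    and vanishes at time 0.\<close>
  define \<phi> where "\<phi> t = (max (- u t) 0)^2 + (max (- v t) 0)^2" for t
  define \<phi>' where "\<phi>' t = 2 * max (- u t) 0 * - (\<alpha> t * u t + p * v t)
    + 2 * max (- v t) 0 * - (\<beta> t * v t + q * u t)" for t
  have "\<phi> T \<le> exp (K * (T - 0)) * \<phi> 0"
  proof (rule gronwall_exp_bound[OF assms(3), of "{0..}"])
    fix t assume t: "t \<in> {0..T}"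
    have "((\<lambda>t. - u t) has_real_derivative - (\<alpha> t * u t + p * v t)) (at t within {0..})"
      "((\<lambda>t. - v t) has_real_derivative - (\<beta> t * v t + q * u t)) (at t within {0..})"
      using du[OF t] dv[OF t] by (auto intro!: derivative_eq_intros)
    from DERIV_add[OF DERIV_chain2[OF has_real_derivative_pos_part_sq this(1)]
        DERIV_chain2[OF has_real_derivative_pos_part_sq this(2)]]
    show "(\<phi> has_real_derivative \<phi>' t) (at t within {0..})"
      unfolding \<phi>_def \<phi>'_def by (simp add: mult.assoc)
    have "\<bar>\<alpha> t\<bar> \<le> max K\<alpha> K\<beta>" "\<bar>\<beta> t\<bar> \<le> max K\<alpha> K\<beta>"
      using K\<alpha>[OF t] K\<beta>[OF t] by auto
    from neg_part_sq_growth[OF this(1) assms(1), of "u t" "v t"]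
      neg_part_sq_growth[OF this(2) assms(2), of "v t" "u t"]
    show "\<phi>' t \<le> K * \<phi> t"
      unfolding \<phi>'_def \<phi>_def K_def by (simp add: algebra_simps)
  qed auto
  moreover have "\<phi> 0 = 0"
    using assms(4,5) by (simp add: \<phi>_def)
  ultimately have "(max (- u T) 0)^2 + (max (- v T) 0)^2 \<le> 0"
    by (simp add: \<phi>_def)
  then show ?thesis
    by (auto simp: sum_power2_le_zero_iff max_def split: if_splits)
qed

lemma riccati_subsolution_le:
  fixes W W' g :: "real \<Rightarrow> real"
  assumes "0 < c" "0 \<le> K" "0 \<le> t0" "t0 \<le> t"
    and der: "\<And>s. 0 \<le> s \<Longrightarrow> (W has_real_derivative W' s) (at s within {0..})"
    and ineq: "\<And>s. 0 \<le> s \<Longrightarrow> W' s \<le> g s - c * (W s)^2"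
    and "W t0 \<le> K" and small: "\<And>s. t0 \<le> s \<Longrightarrow> g s \<le> c * K^2"
  shows "W t \<le> K"
proof -
  define U where "U s = (max (W s - K) 0)^2" for s
  have "U t \<le> U t0"
  proof (rule DERIV_nonpos_imp_decreasing_within[of t0 t "{0..}"])
    fix s assume s: "s \<in> {t0..t}"
    then have "0 \<le> s"
      using assms(3) by simp
    have "((\<lambda>s. W s - K) has_real_derivative W' s) (at s within {0..})"
      using der[OF \<open>0 \<le> s\<close>] by (auto intro!: derivative_eq_intros)
    from DERIV_chain2[OF has_real_derivative_pos_part_sq this]
    show "(U has_real_derivative 2 * max (W s - K) 0 * W' s) (at s within {0..})"
      unfolding U_def by simp
    show "2 * max (W s - K) 0 * W' s \<le> 0"
    proof (cases "W s \<le> K")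
      case False
      then have "c * K^2 \<le> c * (W s)^2"
        using assms(1,2) by (intro mult_left_mono power_mono) auto
      then have "W' s \<le> 0"
        using ineq[OF \<open>0 \<le> s\<close>] small[of s] s by auto
      then show ?thesis
        by (simp add: mult_nonneg_nonpos)
    qed simp
  qed (use assms(3,4) in auto)
  moreover have "U t0 = 0"
    using \<open>W t0 \<le> K\<close> by (simp add: U_def)
  ultimately show ?thesis
    by (simp add: U_def)
qed

lemma riccati_subsolution_reaches_level:
  fixes W W' g :: "real \<Rightarrow> real"
  assumes "0 < c" "0 < K" "0 \<le> T"
    and der: "\<And>s. 0 \<le> s \<Longrightarrow> (W has_real_derivative W' s) (at s within {0..})"
    and ineq: "\<And>s. 0 \<le> s \<Longrightarrow> W' s \<le> g s - c * (W s)^2"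
    and nonneg: "\<And>s. 0 \<le> s \<Longrightarrow> 0 \<le> W s"
    and small: "\<And>s. T \<le> s \<Longrightarrow> g s \<le> c * K^2 / 2"
  shows "\<exists>t\<ge>T. W t \<le> K"
proof (rule ccontr)
  assume "\<not> (\<exists>t\<ge>T. W t \<le> K)"
  then have above: "K < W s" if "T \<le> s" for s
    using that by force
  \<comment> \<open>Above the level K the derivative is at most - c K^2 / 2, so W would reach 0 by time t.\<close>
  define t where "t = T + 2 * W T / (c * K^2)"
  have "T \<le> t"
    unfolding t_def using nonneg[OF assms(3)] assms(1,2) by simp
  have "W t + c * K^2 / 2 * t \<le> W T + c * K^2 / 2 * T"
  proof (rule DERIV_nonpos_imp_decreasing_within[of T t "{0..}"])
    fix s assume s: "s \<in> {T..t}"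
    then have "0 \<le> s"
      using assms(3) by simp
    show "((\<lambda>s. W s + c * K^2 / 2 * s) has_real_derivative W' s + c * K^2 / 2) (at s within {0..})"
      using der[OF \<open>0 \<le> s\<close>] by (auto intro!: derivative_eq_intros)
    have "c * K^2 \<le> c * (W s)^2"
      using above[of s] s assms(1,2) by (intro mult_left_mono power_mono) auto
    then show "W' s + c * K^2 / 2 \<le> 0"
      using ineq[OF \<open>0 \<le> s\<close>] small[of s] s by auto
  qed (use assms(3) \<open>T \<le> t\<close> in auto)
  moreover have "c * K^2 / 2 * t = W T + c * K^2 / 2 * T"
    unfolding t_def using assms(1,2) by (simp add: field_simps)
  ultimately have "W t \<le> 0"
    by linarith
  then show False
    using above[OF \<open>T \<le> t\<close>] assms(2) by simp
qed

lemma riccati_subsolution_tendsto_0: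
  fixes W W' g :: "real \<Rightarrow> real"
  assumes "0 < c"
    and der: "\<And>s. 0 \<le> s \<Longrightarrow> (W has_real_derivative W' s) (at s within {0..})"
    and ineq: "\<And>s. 0 \<le> s \<Longrightarrow> W' s \<le> g s - c * (W s)^2"
    and nonneg: "\<And>s. 0 \<le> s \<Longrightarrow> 0 \<le> W s"
    and "(g \<longlongrightarrow> 0) at_top"
  shows "(W \<longlongrightarrow> 0) at_top"
proof (rule tendstoI)
  fix e :: real assume "0 < e"
  define K where "K = e / 2"
  have "0 < K" "0 < c * K^2 / 2"
    unfolding K_def using \<open>0 < e\<close> assms(1) by simp_all
  have "\<forall>\<^sub>F s in at_top. dist (g s) 0 < c * K^2 / 2"
    using tendstoD[OF assms(5) \<open>0 < c * K^2 / 2\<close>] .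
  then obtain N where N: "\<And>s. N \<le> s \<Longrightarrow> \<bar>g s\<bar> < c * K^2 / 2"
    by (auto simp: eventually_at_top_linorder dist_real_def)
  define T where "T = max N 0"
  have T: "0 \<le> T" "\<And>s. T \<le> s \<Longrightarrow> g s \<le> c * K^2 / 2"
    unfolding T_def using N by force+
  obtain t1 where "T \<le> t1" "W t1 \<le> K"
    using riccati_subsolution_reaches_level[OF assms(1) \<open>0 < K\<close> T(1) der ineq nonneg T(2)] by blast
  have "W t \<le> K" if "t1 \<le> t" for t
  proof (rule riccati_subsolution_le[OF assms(1) _ _ that der ineq \<open>W t1 \<le> K\<close>])
    show "g s \<le> c * K^2" if "t1 \<le> s" for s
      using T(2)[of s] that \<open>T \<le> t1\<close> \<open>0 < c * K^2 / 2\<close> by simp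
  qed (use \<open>0 < K\<close> T(1) \<open>T \<le> t1\<close> in auto)
  then show "\<forall>\<^sub>F t in at_top. dist (W t) 0 < e"
    unfolding eventually_at_top_linorder
  proof (intro exI allI impI)
    fix t assume "t1 \<le> t"
    then have "0 \<le> W t" "W t \<le> K"
      using nonneg[of t] T(1) \<open>T \<le> t1\<close> \<open>\<And>t. t1 \<le> t \<Longrightarrow> W t \<le> K\<close> by auto
    then show "dist (W t) 0 < e"
      unfolding K_def dist_real_def using \<open>0 < e\<close> by simp
  qed
qed

section \<open>Stability of an equilibrium at the corner of the quadrant\<close>

lemma globally_asymptotically_stable_unique_equilibrium:
  assumes "globally_asymptotically_stable f X e" "e' \<in> X" "f e' = 0"
  shows "e' = e"
proof -
  have "is_solution f X (\<lambda>t. e')"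
    using assms(2,3) by (simp add: is_solution_def)
  then have "((\<lambda>t::real. e') \<longlongrightarrow> e) at_top"
    using assms(1) by (simp add: globally_asymptotically_stable_def)
  then show ?thesis
    by (simp add: tendsto_const_iff)
qed

lemma globally_asymptotically_stable_quadrantI:
  fixes f :: "real \<times> real \<Rightarrow> real \<times> real"
  assumes "(0, 0) \<in> X" "f (0, 0) = (0, 0)"
    and nonneg: "\<And>x t. is_solution f X x \<Longrightarrow> 0 \<le> t \<Longrightarrow> 0 \<le> fst (x t) \<and> 0 \<le> snd (x t)"
    and stable: "\<And>\<epsilon>. 0 < \<epsilon> \<Longrightarrow> \<exists>\<delta>>0. \<forall>x. is_solution f X x \<longrightarrow> fst (x 0) < \<delta> \<longrightarrow> snd (x 0) < \<delta> \<longrightarrow>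
        (\<forall>t\<ge>0. fst (x t) + snd (x t) < \<epsilon>)"
    and attractive: "\<And>x. is_solution f X x \<Longrightarrow>
        ((\<lambda>t. fst (x t)) \<longlongrightarrow> 0) at_top \<and> ((\<lambda>t. snd (x t)) \<longlongrightarrow> 0) at_top"
  shows "globally_asymptotically_stable f X (0, 0)"
  unfolding globally_asymptotically_stable_def
proof (intro conjI allI impI)
  show "(0, 0) \<in> X" "f (0, 0) = 0"
    using assms(1,2) by (simp_all add: zero_prod_def)
next
  fix \<epsilon> :: real assume "0 < \<epsilon>"
  then obtain \<delta> where "0 < \<delta>" and \<delta>: "\<forall>x. is_solution f X x \<longrightarrow> fst (x 0) < \<delta> \<longrightarrow> snd (x 0) < \<delta> \<longrightarrow>
      (\<forall>t\<ge>0. fst (x t) + snd (x t) < \<epsilon>)"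
    using stable by blast
  show "\<exists>\<delta>>0. \<forall>x. is_solution f X x \<and> dist (x 0) (0, 0) < \<delta> \<longrightarrow> (\<forall>t\<ge>0. dist (x t) (0, 0) < \<epsilon>)"
  proof (intro exI conjI allI impI)
    fix x t assume x: "is_solution f X x \<and> dist (x 0) (0, 0) < \<delta>" and "0 \<le> (t::real)"
    have "fst (x 0) < \<delta>" "snd (x 0) < \<delta>"
      using x norm_fst_le[of "fst (x 0)" "snd (x 0)"] norm_snd_le[of "snd (x 0)" "fst (x 0)"]
      by (auto simp: dist_norm zero_prod_def[symmetric])
    then have "fst (x t) + snd (x t) < \<epsilon>"
      using \<delta> x \<open>0 \<le> t\<close> by blast
    moreover have "norm (x t) \<le> \<bar>fst (x t)\<bar> + \<bar>snd (x t)\<bar>"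
      by (cases "x t") (simp add: norm_Pair sqrt_sum_squares_le_sum_abs)
    ultimately show "dist (x t) (0, 0) < \<epsilon>"
      using nonneg[of x t] x \<open>0 \<le> t\<close> by (simp add: dist_norm zero_prod_def[symmetric])
  qed (rule \<open>0 < \<delta>\<close>)
next
  fix x assume "is_solution f X x"
  then have "((\<lambda>t. (fst (x t), snd (x t))) \<longlongrightarrow> (0, 0)) at_top"
    using attractive by (intro tendsto_Pair) auto
  then show "(x \<longlongrightarrow> (0, 0)) at_top"
    by simp
qed

lemma globally_asymptotically_stable_quadrant_linearI:
  fixes f :: "real \<times> real \<Rightarrow> real \<times> real" and v w :: real
  assumes "(0, 0) \<in> X" "f (0, 0) = (0, 0)" "0 < v" "0 < w"
    and nonneg: "\<And>x t. is_solution f X x \<Longrightarrow> 0 \<le> t \<Longrightarrow> 0 \<le> fst (x t) \<and> 0 \<le> snd (x t)"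
    and decreasing: "\<And>x t. is_solution f X x \<Longrightarrow> 0 \<le> t \<Longrightarrow>
        v * fst (x t) + w * snd (x t) \<le> v * fst (x 0) + w * snd (x 0)"
    and tendsto: "\<And>x. is_solution f X x \<Longrightarrow> ((\<lambda>t. v * fst (x t) + w * snd (x t)) \<longlongrightarrow> 0) at_top"
  shows "globally_asymptotically_stable f X (0, 0)"
proof (rule globally_asymptotically_stable_quadrantI)
  show "(0, 0) \<in> X" "f (0, 0) = (0, 0)"
    by (fact assms(1), fact assms(2))
  show "0 \<le> fst (x t) \<and> 0 \<le> snd (x t)" if "is_solution f X x" "0 \<le> t" for x t
    using nonneg that .
  define m where "m = min v w"
  define M where "M = max v w"
  have "0 < m" "0 < M"
    unfolding m_def M_def using assms(3,4) by auto
  have lower: "m * (fst (x t) + snd (x t)) \<le> v * fst (x t) + w * snd (x t)"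
    and upper: "v * fst (x t) + w * snd (x t) \<le> M * (fst (x t) + snd (x t))"
    if "is_solution f X x" "0 \<le> t" for x and t :: real
  proof -
    have "m * fst (x t) \<le> v * fst (x t)" "m * snd (x t) \<le> w * snd (x t)"
      "v * fst (x t) \<le> M * fst (x t)" "w * snd (x t) \<le> M * snd (x t)"
      using nonneg[OF that] unfolding m_def M_def by (simp_all add: mult_right_mono)
    then show "m * (fst (x t) + snd (x t)) \<le> v * fst (x t) + w * snd (x t)"
      "v * fst (x t) + w * snd (x t) \<le> M * (fst (x t) + snd (x t))"
      by (simp_all add: algebra_simps)
  qed
  show "\<exists>\<delta>>0. \<forall>x. is_solution f X x \<longrightarrow> fst (x 0) < \<delta> \<longrightarrow> snd (x 0) < \<delta> \<longrightarrow>
      (\<forall>t\<ge>0. fst (x t) + snd (x t) < \<epsilon>)" if "0 < \<epsilon>" for \<epsilon>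
  proof (intro exI conjI allI impI)
    show "0 < \<epsilon> * m / (2 * M)"
      using \<open>0 < \<epsilon>\<close> \<open>0 < m\<close> \<open>0 < M\<close> by simp
    fix x and t :: real
    assume x: "is_solution f X x" "fst (x 0) < \<epsilon> * m / (2 * M)" "snd (x 0) < \<epsilon> * m / (2 * M)"
      and "0 \<le> t"
    have "M * (fst (x 0) + snd (x 0)) < m * \<epsilon>"
      using x(2,3) \<open>0 < M\<close> by (simp add: field_simps)
    then have "m * (fst (x t) + snd (x t)) < m * \<epsilon>"
      using lower[OF x(1) \<open>0 \<le> t\<close>] decreasing[OF x(1) \<open>0 \<le> t\<close>] upper[OF x(1) order_refl]
      by linarith
    then show "fst (x t) + snd (x t) < \<epsilon>"
      using \<open>0 < m\<close> by simp
  qed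
  show "((\<lambda>t. fst (x t)) \<longlongrightarrow> 0) at_top \<and> ((\<lambda>t. snd (x t)) \<longlongrightarrow> 0) at_top"
    if x: "is_solution f X x" for x
  proof -
    have lim: "((\<lambda>t. (v * fst (x t) + w * snd (x t)) / m) \<longlongrightarrow> 0) at_top"
      using tendsto_divide_zero[OF tendsto[OF x]] .
    have "0 \<le> fst (x t)" "fst (x t) \<le> (v * fst (x t) + w * snd (x t)) / m"
      "0 \<le> snd (x t)" "snd (x t) \<le> (v * fst (x t) + w * snd (x t)) / m" if "0 \<le> t" for t
    proof -
      have "fst (x t) + snd (x t) \<le> (v * fst (x t) + w * snd (x t)) / m"
        using lower[OF x that] \<open>0 < m\<close> by (simp add: pos_le_divide_eq mult.commute)
      then show "0 \<le> fst (x t)" "fst (x t) \<le> (v * fst (x t) + w * snd (x t)) / m"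
        "0 \<le> snd (x t)" "snd (x t) \<le> (v * fst (x t) + w * snd (x t)) / m"
        using nonneg[OF x that] by linarith+
    qed
    then have ev: "\<forall>\<^sub>F t in at_top. 0 \<le> fst (x t)"
      "\<forall>\<^sub>F t in at_top. fst (x t) \<le> (v * fst (x t) + w * snd (x t)) / m"
      "\<forall>\<^sub>F t in at_top. 0 \<le> snd (x t)"
      "\<forall>\<^sub>F t in at_top. snd (x t) \<le> (v * fst (x t) + w * snd (x t)) / m"
      unfolding eventually_at_top_linorder by blast+
    show ?thesis
      using tendsto_sandwich[OF ev(1,2) tendsto_const lim]
        tendsto_sandwich[OF ev(3,4) tendsto_const lim] by blast
  qed
qed

section \<open>The bi-virus system\<close>

lemma bivirus_field_apply:
  "bivirus_field bH bL gH gL qHL qLH p =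
    (bH * fst p * (1 - fst p - snd p) + qLH * snd p - (qHL + gH) * fst p,
     bL * snd p * (1 - fst p - snd p) + qHL * fst p - (qLH + gL) * snd p)"
  by (cases p) (simp add: bivirus_field_def)

lemma bivirus_solution_derivs:
  assumes "is_solution (bivirus_field bH bL gH gL qHL qLH) X x" "0 \<le> t"
  shows "((\<lambda>t. fst (x t)) has_real_derivative
      bH * fst (x t) * (1 - fst (x t) - snd (x t)) + qLH * snd (x t) - (qHL + gH) * fst (x t))
      (at t within {0..})"
    and "((\<lambda>t. snd (x t)) has_real_derivative
      bL * snd (x t) * (1 - fst (x t) - snd (x t)) + qHL * fst (x t) - (qLH + gL) * snd (x t))
      (at t within {0..})"
proof -
  have "(x has_vector_derivative bivirus_field bH bL gH gL qHL qLH (x t)) (at t within {0..})"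
    using assms unfolding is_solution_def by blast
  from bounded_linear.has_vector_derivative[OF bounded_linear_fst this]
    bounded_linear.has_vector_derivative[OF bounded_linear_snd this]
  show "((\<lambda>t. fst (x t)) has_real_derivative
      bH * fst (x t) * (1 - fst (x t) - snd (x t)) + qLH * snd (x t) - (qHL + gH) * fst (x t))
      (at t within {0..})"
    and "((\<lambda>t. snd (x t)) has_real_derivative
      bL * snd (x t) * (1 - fst (x t) - snd (x t)) + qHL * fst (x t) - (qLH + gL) * snd (x t))
      (at t within {0..})"
    by (simp_all add: has_real_derivative_iff_has_vector_derivative bivirus_field_apply)
qed

lemma bivirus_solution_nonneg:
  assumes "0 \<le> qHL" "0 \<le> qLH" "is_solution (bivirus_field bH bL gH gL qHL qLH) simplex2 x" "0 \<le> T"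
  shows "0 \<le> fst (x T) \<and> 0 \<le> snd (x T)"
proof -
  define h where "h t = fst (x t)" for t
  define l where "l t = snd (x t)" for t
  note derivs = bivirus_solution_derivs[OF assms(3), folded h_def l_def]
  have "continuous_on {0..} h" "continuous_on {0..} l"
    using derivs by (auto intro!: DERIV_continuous_on)
  then have cont: "continuous_on {0..T} h" "continuous_on {0..T} l"
    by (auto elim: continuous_on_subset)
  have "continuous_on {0..T} (\<lambda>t. bH * (1 - h t - l t) - (qHL + gH))"
    "continuous_on {0..T} (\<lambda>t. bL * (1 - h t - l t) - (qLH + gL))"
    by (intro continuous_intros cont)+
  moreover have "0 \<le> h 0" "0 \<le> l 0"
    using assms(3) by (auto simp: is_solution_def simplex2_def h_def l_def)
  moreover have
    "(h has_real_derivative (bH * (1 - h t - l t) - (qHL + gH)) * h t + qLH * l t)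
      (at t within {0..})"
    "(l has_real_derivative (bL * (1 - h t - l t) - (qLH + gL)) * l t + qHL * h t)
      (at t within {0..})"
    if "t \<in> {0..T}" for t
    using derivs[of t] that by (simp_all add: algebra_simps)
  ultimately have "0 \<le> h T \<and> 0 \<le> l T"
    using cooperative_system_nonneg[OF assms(2,1,4)] by blast
  then show ?thesis
    by (simp add: h_def l_def)
qed

lemma quadratic_root_in_unit_interval:
  fixes bH bL dH dL qHL qLH :: real
  assumes "0 < bH" "0 < bL" "0 \<le> qHL" "qHL < dH" "0 \<le> qLH" "qLH < dL"
    and "\<not> (bH \<le> dH \<and> bL \<le> dL \<and> qLH * qHL \<le> (dH - bH) * (dL - bL))"
  obtains \<sigma> where "0 < \<sigma>" "\<sigma> < 1" "0 \<le> dH - \<sigma> * bH" "0 \<le> dL - \<sigma> * bL"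
    "(dH - \<sigma> * bH) * (dL - \<sigma> * bL) = qLH * qHL"
proof -
  define f where "f \<sigma> = (dH - \<sigma> * bH) * (dL - \<sigma> * bL) - qLH * qHL" for \<sigma>
  define m where "m = min (dH / bH) (dL / bL)"
  have "qLH * qHL < dL * dH"
    using assms(3-6) by (intro mult_strict_mono') auto
  then have "0 < f 0"
    unfolding f_def by (simp add: mult.commute)
  moreover have "f m \<le> 0" "0 < m"
    unfolding f_def m_def using assms(1-6) by (auto simp: min_def)
  moreover have "continuous_on {0..m} f"
    unfolding f_def by (intro continuous_intros)
  ultimately obtain \<sigma> where \<sigma>: "0 \<le> \<sigma>" "\<sigma> \<le> m" "f \<sigma> = 0"
    using IVT2'[of f m 0 0] by auto
  with \<open>0 < f 0\<close> have "0 < \<sigma>"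
    by (cases "\<sigma> = 0") auto
  have "\<sigma> \<le> dH / bH" "\<sigma> \<le> dL / bL"
    using \<sigma>(2) unfolding m_def by auto
  then have A: "0 \<le> dH - \<sigma> * bH" and B: "0 \<le> dL - \<sigma> * bL"
    using assms(1,2) by (simp_all add: pos_le_divide_eq)
  have "\<sigma> < 1"
  proof (rule ccontr)
    assume "\<not> \<sigma> < 1"
    then have "dH - \<sigma> * bH \<le> dH - bH" "dL - \<sigma> * bL \<le> dL - bL"
      using assms(1,2) by (simp_all add: mult_le_cancel_right1)
    moreover from this have "(dH - \<sigma> * bH) * (dL - \<sigma> * bL) \<le> (dH - bH) * (dL - bL)"
      using A B by (intro mult_mono) auto
    ultimately show False
      using assms(7) A B \<sigma>(3) unfolding f_def by auto
  qed
  then show thesis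
    using that \<open>0 < \<sigma>\<close> A B \<sigma>(3) unfolding f_def by simp
qed

lemma bivirus_endemic_equilibrium:
  fixes bH bL gH gL qHL qLH :: real
  assumes "0 < bH" "0 < bL" "0 < gH" "0 < gL" "0 \<le> qHL" "0 \<le> qLH" "bH / gH \<noteq> bL / gL"
    and "\<not> (bH \<le> gH + qHL \<and> bL \<le> gL + qLH \<and> qLH * qHL \<le> (gH + qHL - bH) * (gL + qLH - bL))"
  shows "\<exists>e\<in>simplex2. e \<noteq> (0, 0) \<and> bivirus_field bH bL gH gL qHL qLH e = (0, 0)"
proof -
  obtain \<sigma> where \<sigma>: "0 < \<sigma>" "\<sigma> < 1"
    and A: "0 \<le> gH + qHL - \<sigma> * bH" and B: "0 \<le> gL + qLH - \<sigma> * bL"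
    and AB: "(gH + qHL - \<sigma> * bH) * (gL + qLH - \<sigma> * bL) = qLH * qHL"
    using quadratic_root_in_unit_interval[of bH bL qHL "gH + qHL" qLH "gL + qLH"] assms by auto
  \<comment> \<open>The endemic state has susceptible fraction \<sigma>; its infected profile spans the kernel of
    the singular matrix [[\<sigma> bH - gH - qHL, qLH], [qHL, \<sigma> bL - gL - qLH]].\<close>
  define w1 where "w1 = qLH + (gL + qLH - \<sigma> * bL)"
  define w2 where "w2 = (gH + qHL - \<sigma> * bH) + qHL"
  have "0 < w1 + w2"
  proof (rule ccontr)
    assume "\<not> 0 < w1 + w2"
    then have "gH = \<sigma> * bH" "gL = \<sigma> * bL"
      using A B assms(5,6) unfolding w1_def w2_def by auto
    then show False
      using assms(1-4,7) \<sigma>(1) by auto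
  qed
  define c where "c = (1 - \<sigma>) / (w1 + w2)"
  have "0 \<le> c * w1" "0 \<le> c * w2"
    unfolding c_def using \<open>0 < w1 + w2\<close> \<sigma>(2) A B assms(5,6) by (auto simp: w1_def w2_def)
  have sum: "c * w1 + c * w2 = 1 - \<sigma>"
    unfolding distrib_left[symmetric] c_def using \<open>0 < w1 + w2\<close> by simp
  have "(c * w1, c * w2) \<in> simplex2"
    using sum \<open>0 \<le> c * w1\<close> \<open>0 \<le> c * w2\<close> \<sigma>(1) by (auto simp: simplex2_def)
  moreover have "(c * w1, c * w2) \<noteq> (0, 0)"
    using sum \<sigma>(2) by auto
  moreover have "bivirus_field bH bL gH gL qHL qLH (c * w1, c * w2) = (0, 0)"
  proof -
    have "1 - c * w1 - c * w2 = \<sigma>"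
      using sum by linarith
    then have "bivirus_field bH bL gH gL qHL qLH (c * w1, c * w2) =
        (bH * (c * w1) * \<sigma> + qLH * (c * w2) - (qHL + gH) * (c * w1),
         bL * (c * w2) * \<sigma> + qHL * (c * w1) - (qLH + gL) * (c * w2))"
      by (simp add: bivirus_field_def)
    also have "\<dots> = (c * (qLH * qHL - (gH + qHL - \<sigma> * bH) * (gL + qLH - \<sigma> * bL)),
                      c * (qLH * qHL - (gH + qHL - \<sigma> * bH) * (gL + qLH - \<sigma> * bL)))"
      unfolding w1_def w2_def by (simp add: algebra_simps)
    finally show ?thesis
      using AB by simp
  qed
  ultimately show ?thesis
    by blast
qed

lemma bivirus_linear_lyapunov_derivative:
  fixes bH bL gH gL qHL qLH h l :: real
  defines "a \<equiv> gH + qHL - bH" and "b \<equiv> gL + qLH - bL"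
  defines "v1 \<equiv> b + qHL" and "v2 \<equiv> a + qLH"
  assumes "0 \<le> h" "0 \<le> l" "0 < bH" "0 < bL" "qLH * qHL \<le> a * b" "0 < v1" "0 < v2"
  shows "v1 * (bH * h * (1 - h - l) + qLH * l - (qHL + gH) * h)
      + v2 * (bL * l * (1 - h - l) + qHL * h - (qLH + gL) * l)
    \<le> - (min (v1 * bH) (v2 * bL) / (max v1 v2)^2) * (v1 * h + v2 * l)^2"
proof -
  define s where "s = h + l"
  define m where "m = min (v1 * bH) (v2 * bL)"
  define M where "M = max v1 v2"
  have "0 \<le> s" "0 < m" "0 < M"
    unfolding s_def m_def M_def using assms(5-8,10,11) by auto
  \<comment> \<open>(v1, v2) J = (qLH qHL - a b) (1, 1) for the Jacobian J = [[-a, qLH], [qHL, -b]] at the origin.\<close>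
  have "v1 * (bH * h * (1 - h - l) + qLH * l - (qHL + gH) * h)
      + v2 * (bL * l * (1 - h - l) + qHL * h - (qLH + gL) * l)
      = s * (qLH * qHL - a * b) - s * (v1 * bH * h + v2 * bL * l)"
    unfolding s_def a_def b_def v1_def v2_def by (simp add: algebra_simps)
  also have "\<dots> \<le> - s * (m * s)"
  proof -
    have "m * h \<le> v1 * bH * h" "m * l \<le> v2 * bL * l"
      unfolding m_def using assms(5,6) by (simp_all add: mult_right_mono)
    then have "m * s \<le> v1 * bH * h + v2 * bL * l"
      unfolding s_def by (simp add: algebra_simps)
    then have "s * (m * s) \<le> s * (v1 * bH * h + v2 * bL * l)"
      using \<open>0 \<le> s\<close> by (rule mult_left_mono)
    moreover have "s * (qLH * qHL - a * b) \<le> 0"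
      using \<open>0 \<le> s\<close> assms(9) by (simp add: mult_nonneg_nonpos)
    ultimately show ?thesis
      by linarith
  qed
  also have "\<dots> \<le> - (m / M^2) * (v1 * h + v2 * l)^2"
  proof -
    have "v1 * h \<le> M * h" "v2 * l \<le> M * l"
      unfolding M_def using assms(5,6) by (simp_all add: mult_right_mono)
    then have "(v1 * h + v2 * l)^2 \<le> (M * s)^2"
      unfolding s_def using assms(5,6,10,11) by (intro power_mono) (auto simp: algebra_simps)
    then have "(m / M^2) * (v1 * h + v2 * l)^2 \<le> (m / M^2) * (M * s)^2"
      using \<open>0 < m\<close> by (intro mult_left_mono) auto
    also have "\<dots> = m * s^2"
      using \<open>0 < M\<close> by (simp add: power_mult_distrib)
    finally show ?thesis
      by (simp add: power2_eq_square algebra_simps)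
  qed
  finally show ?thesis
    unfolding m_def M_def .
qed

lemma bivirus_lyapunov_along_solution:
  fixes bH bL gH gL qHL qLH :: real
  defines "a \<equiv> gH + qHL - bH" and "b \<equiv> gL + qLH - bL"
  assumes "0 < bH" "0 < bL" "0 \<le> qHL" "0 \<le> qLH" "qLH * qHL \<le> a * b" "0 < b + qHL" "0 < a + qLH"
    and sol: "is_solution (bivirus_field bH bL gH gL qHL qLH) simplex2 x"
  defines "V \<equiv> \<lambda>t. (b + qHL) * fst (x t) + (a + qLH) * snd (x t)"
  shows "\<And>t. 0 \<le> t \<Longrightarrow> V t \<le> V 0" and "(V \<longlongrightarrow> 0) at_top"
proof -
  define c where "c = min ((b + qHL) * bH) ((a + qLH) * bL) / (max (b + qHL) (a + qLH))^2"
  have "0 < c"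
    unfolding c_def using assms(3,4,8,9) by auto
  have nonneg: "0 \<le> fst (x t)" "0 \<le> snd (x t)" if "0 \<le> t" for t
    using bivirus_solution_nonneg[OF assms(5,6) sol that] by auto
  define V' where "V' t = (b + qHL) * (bH * fst (x t) * (1 - fst (x t) - snd (x t))
      + qLH * snd (x t) - (qHL + gH) * fst (x t))
    + (a + qLH) * (bL * snd (x t) * (1 - fst (x t) - snd (x t))
      + qHL * fst (x t) - (qLH + gL) * snd (x t))" for t
  have der: "(V has_real_derivative V' t) (at t within {0..})" if "0 \<le> t" for t
    unfolding V_def V'_def using bivirus_solution_derivs[OF sol that] by (intro DERIV_add DERIV_cmult)
  have ineq: "V' t \<le> 0 - c * (V t)^2" if "0 \<le> t" for t
    using bivirus_linear_lyapunov_derivative[OF nonneg[OF that] assms(3,4)] assms(7-9)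
    unfolding a_def b_def c_def V_def V'_def by simp
  show "V t \<le> V 0" if "0 \<le> t" for t
    by (rule riccati_subsolution_le[OF \<open>0 < c\<close> _ order_refl that der ineq order_refl])
      (use nonneg[OF order_refl] assms(8,9) \<open>0 < c\<close> in \<open>simp_all add: V_def\<close>)
  show "(V \<longlongrightarrow> 0) at_top"
  proof (rule riccati_subsolution_tendsto_0[OF \<open>0 < c\<close> der ineq])
    show "0 \<le> V s" if "0 \<le> s" for s
      using nonneg[OF that] assms(8,9) unfolding V_def by simp
  qed (auto intro: tendsto_const)
qed

lemma bivirus_gas_nondegenerate:
  fixes bH bL gH gL qHL qLH :: real
  defines "a \<equiv> gH + qHL - bH" and "b \<equiv> gL + qLH - bL"
  assumes "0 < bH" "0 < bL" "0 \<le> qHL" "0 \<le> qLH" "qLH * qHL \<le> a * b" "0 < b + qHL" "0 < a + qLH"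
  shows "globally_asymptotically_stable (bivirus_field bH bL gH gL qHL qLH) simplex2 (0, 0)"
proof (rule globally_asymptotically_stable_quadrant_linearI[where v = "b + qHL" and w = "a + qLH"])
  fix x assume x: "is_solution (bivirus_field bH bL gH gL qHL qLH) simplex2 x"
  note lyapunov =
    bivirus_lyapunov_along_solution[OF assms(3-9)[unfolded a_def b_def] x, folded a_def b_def]
  show "0 \<le> fst (x t) \<and> 0 \<le> snd (x t)" if "0 \<le> t" for t
    using bivirus_solution_nonneg[OF assms(5,6) x that] .
  show "(b + qHL) * fst (x t) + (a + qLH) * snd (x t)
      \<le> (b + qHL) * fst (x 0) + (a + qLH) * snd (x 0)" if "0 \<le> t" for t
    using lyapunov(1)[OF that] .
  show "((\<lambda>t. (b + qHL) * fst (x t) + (a + qLH) * snd (x t)) \<longlongrightarrow> 0) at_top"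
    using lyapunov(2) .
qed (use assms(8,9) in \<open>simp_all add: simplex2_def bivirus_field_def\<close>)

lemma bivirus_degenerate_solution_bounds:
  fixes bH bL gH gL qHL :: real
  assumes "0 < bH" "0 < bL" "0 \<le> qHL" "gH + qHL = bH" "bL \<le> gL"
    and sol: "is_solution (bivirus_field bH bL gH gL qHL 0) simplex2 x"
  shows "\<And>s t. 0 \<le> s \<Longrightarrow> s \<le> t \<Longrightarrow> fst (x t) \<le> fst (x s)"
    and "\<And>t K. 0 \<le> t \<Longrightarrow> 0 \<le> K \<Longrightarrow> snd (x 0) \<le> K \<Longrightarrow> qHL * fst (x 0) \<le> bL * K^2 \<Longrightarrow> snd (x t) \<le> K"
    and "((\<lambda>t. fst (x t)) \<longlongrightarrow> 0) at_top" and "((\<lambda>t. snd (x t)) \<longlongrightarrow> 0) at_top"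
proof -
  define h where "h t = fst (x t)" for t
  define l where "l t = snd (x t)" for t
  have nonneg: "0 \<le> h t" "0 \<le> l t" if "0 \<le> t" for t
    using bivirus_solution_nonneg[OF assms(3) order_refl sol that] by (auto simp: h_def l_def)
  note derivs = bivirus_solution_derivs[OF sol, folded h_def l_def]
  have h_ineq: "bH * h t * (1 - h t - l t) + 0 * l t - (qHL + gH) * h t \<le> 0 - bH * (h t)^2"
    if "0 \<le> t" for t
  proof -
    have "0 \<le> bH * (h t * l t)"
      using nonneg[OF that] assms(1) by simp
    then show ?thesis
      using assms(4) by (simp add: power2_eq_square algebra_simps)
  qed
  have l_ineq: "bL * l t * (1 - h t - l t) + qHL * h t - (0 + gL) * l t \<le> qHL * h t - bL * (l t)^2"
    if "0 \<le> t" for t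
  proof -
    have "0 \<le> (gL - bL) * l t" "0 \<le> bL * (h t * l t)"
      using nonneg[OF that] assms(2,5) by simp_all
    then show ?thesis
      by (simp add: power2_eq_square algebra_simps)
  qed
  have h_antimono: "h t \<le> h s" if "0 \<le> s" "s \<le> t" for s t
    by (rule riccati_subsolution_le[where g = "\<lambda>_. 0", OF assms(1) _ that derivs(1) h_ineq order_refl])
      (use nonneg[OF \<open>0 \<le> s\<close>] assms(1) in auto)
  show "fst (x t) \<le> fst (x s)" if "0 \<le> s" "s \<le> t" for s t
    using h_antimono[OF that] by (simp add: h_def)
  show "snd (x t) \<le> K"
    if "0 \<le> t" "0 \<le> K" "snd (x 0) \<le> K" "qHL * fst (x 0) \<le> bL * K^2" for t K
  proof -
    have small: "qHL * h s \<le> bL * K^2" if "0 \<le> s" for s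
      using mult_left_mono[OF h_antimono[OF order_refl that] assms(3)] \<open>qHL * fst (x 0) \<le> bL * K^2\<close>
      by (simp add: h_def)
    have "l t \<le> K"
      by (rule riccati_subsolution_le[OF assms(2) that(2) order_refl that(1) derivs(2) l_ineq])
        (use that(3) small in \<open>simp_all add: l_def\<close>)
    then show ?thesis
      by (simp add: l_def)
  qed
  have "(h \<longlongrightarrow> 0) at_top"
    by (rule riccati_subsolution_tendsto_0[OF assms(1) derivs(1) h_ineq nonneg(1)]) auto
  moreover have "(l \<longlongrightarrow> 0) at_top"
    by (rule riccati_subsolution_tendsto_0[OF assms(2) derivs(2) l_ineq nonneg(2)])
      (use tendsto_mult_right_zero[OF \<open>(h \<longlongrightarrow> 0) at_top\<close>, of qHL] in auto)
  ultimately show "((\<lambda>t. fst (x t)) \<longlongrightarrow> 0) at_top" "((\<lambda>t. snd (x t)) \<longlongrightarrow> 0) at_top"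
    by (simp_all add: h_def[abs_def] l_def[abs_def])
qed

lemma bivirus_degenerate_stable:
  fixes bH bL gH gL qHL \<epsilon> :: real
  assumes "0 < bH" "0 < bL" "0 \<le> qHL" "gH + qHL = bH" "bL \<le> gL" "0 < \<epsilon>"
  shows "\<exists>\<delta>>0. \<forall>x. is_solution (bivirus_field bH bL gH gL qHL 0) simplex2 x \<longrightarrow>
    fst (x 0) < \<delta> \<longrightarrow> snd (x 0) < \<delta> \<longrightarrow> (\<forall>t\<ge>0. fst (x t) + snd (x t) < \<epsilon>)"
proof -
  define K where "K = \<epsilon> / 2"
  define \<delta> where "\<delta> = min K (bL * K^2 / (qHL + 1))"
  have "0 < K" "0 < \<delta>"
    unfolding K_def \<delta>_def using assms(2,3,6) by simp_all
  have "qHL * \<delta> \<le> (qHL + 1) * (bL * K^2 / (qHL + 1))"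
    unfolding \<delta>_def using \<open>0 < K\<close> assms(2,3) by (intro mult_mono) auto
  then have "qHL * \<delta> \<le> bL * K^2"
    using assms(3) by simp
  have "fst (x t) + snd (x t) < \<epsilon>"
    if x: "is_solution (bivirus_field bH bL gH gL qHL 0) simplex2 x" "fst (x 0) < \<delta>" "snd (x 0) < \<delta>"
      and "0 \<le> t" for x t
  proof -
    note bounds = bivirus_degenerate_solution_bounds[OF assms(1-5) x(1)]
    have "qHL * fst (x 0) \<le> bL * K^2"
      using mult_left_mono[of "fst (x 0)" \<delta> qHL] x(2) assms(3) \<open>qHL * \<delta> \<le> bL * K^2\<close> by simp
    then have "snd (x t) \<le> K"
      using bounds(2)[OF \<open>0 \<le> t\<close>] \<open>0 < K\<close> x(3) unfolding \<delta>_def by simp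
    moreover have "fst (x t) < K"
      using bounds(1)[OF order_refl \<open>0 \<le> t\<close>] x(2) unfolding \<delta>_def by simp
    ultimately show ?thesis
      unfolding K_def by simp
  qed
  with \<open>0 < \<delta>\<close> show ?thesis
    by blast
qed

lemma bivirus_gas_degenerate:
  fixes bH bL gH gL qHL :: real
  assumes "0 < bH" "0 < bL" "0 \<le> qHL" "gH + qHL = bH" "bL \<le> gL"
  shows "globally_asymptotically_stable (bivirus_field bH bL gH gL qHL 0) simplex2 (0, 0)"
proof (rule globally_asymptotically_stable_quadrantI)
  fix x assume x: "is_solution (bivirus_field bH bL gH gL qHL 0) simplex2 x"
  show "0 \<le> fst (x t) \<and> 0 \<le> snd (x t)" if "0 \<le> t" for t
    using bivirus_solution_nonneg[OF assms(3) order_refl x that] .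
  show "((\<lambda>t. fst (x t)) \<longlongrightarrow> 0) at_top \<and> ((\<lambda>t. snd (x t)) \<longlongrightarrow> 0) at_top"
    using bivirus_degenerate_solution_bounds(3,4)[OF assms x] by blast
qed (use bivirus_degenerate_stable[OF assms] in \<open>simp_all add: simplex2_def bivirus_field_def\<close>)

lemma bivirus_gas_iff_threshold:
  fixes bH bL gH gL qHL qLH :: real
  assumes "0 < bH" "0 < bL" "0 < gH" "0 < gL" "0 \<le> qHL" "0 \<le> qLH" "bL / gL < bH / gH"
  shows "globally_asymptotically_stable (bivirus_field bH bL gH gL qHL qLH) simplex2 (0, 0)
    \<longleftrightarrow> bH \<le> gH + qHL \<and> bL \<le> gL + qLH \<and> qLH * qHL \<le> (gH + qHL - bH) * (gL + qLH - bL)"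
    (is "?gas \<longleftrightarrow> ?threshold")
proof
  assume ?gas
  show ?threshold
  proof (rule ccontr)
    assume "\<not> ?threshold"
    moreover have "bH / gH \<noteq> bL / gL"
      using assms(7) by simp
    ultimately obtain e
      where e: "e \<in> simplex2" "e \<noteq> (0, 0)" "bivirus_field bH bL gH gL qHL qLH e = (0, 0)"
      using bivirus_endemic_equilibrium[OF assms(1-6)] by blast
    from e(3) have "bivirus_field bH bL gH gL qHL qLH e = 0"
      by (simp add: zero_prod_def)
    then have "e = (0, 0)"
      by (rule globally_asymptotically_stable_unique_equilibrium[OF \<open>?gas\<close> e(1)])
    with e(2) show False ..
  qed
next
  assume ?threshold
  show ?gas
  proof (cases "0 < gH + qHL - bH + qLH")
    case True
    have "0 < gL + qLH - bL + qHL"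
    proof (rule ccontr)
      assume "\<not> 0 < gL + qLH - bL + qHL"
      then have "bH / gH \<le> 1" "1 \<le> bL / gL"
        using \<open>?threshold\<close> assms(3-6) by auto
      then show False
        using assms(7) by linarith
    qed
    with True show ?thesis
      using bivirus_gas_nondegenerate[OF assms(1,2,5,6)] \<open>?threshold\<close> by simp
  next
    case False
    then have "qLH = 0" "gH + qHL = bH"
      using \<open>?threshold\<close> assms(6) by auto
    then show ?thesis
      using bivirus_gas_degenerate[OF assms(1,2,5)] \<open>?threshold\<close> by simp
  qed
qed

theorem theorem1:
  fixes bH bL gH gL qHL qLH \<alpha> zS :: real
  assumes "bH > 0" "bL > 0" "gH > 0" "gL > 0"
    and "bH / gH > bL / gL" and "bH > bL"
    and "qHL \<ge> 0" "qLH \<ge> 0"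
    and "0 < \<alpha>" "\<alpha> < 1"
    and "0 \<le> zS" "zS \<le> 1"
  defines "bH' \<equiv> bH * (\<alpha> * zS + 1 - zS)"
    and "bL' \<equiv> bL * (\<alpha> * zS + 1 - zS)"
  defines "B \<equiv> diag2 bH' bL'"
    and "D \<equiv> diag2 (gH + qHL) (gL + qLH)"
    and "M \<equiv> offdiag2 qLH qHL"
  shows "globally_asymptotically_stable (bivirus_field bH' bL' gH gL qHL qLH) simplex2 (0, 0)
     \<longleftrightarrow> spectral_radius (matrix_inv D ** (B + M)) \<le> 1"
proof -
  define k where "k = \<alpha> * zS + 1 - zS"
  have "0 \<le> (1 - zS) * (1 - \<alpha>)"
    using assms(10,12) by simp
  then have "\<alpha> \<le> k"
    unfolding k_def by (simp add: algebra_simps)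
  then have "0 < k"
    using assms(9) by linarith
  have "k * (bL / gL) < k * (bH / gH)"
    using mult_strict_left_mono[OF assms(5) \<open>0 < k\<close>] .
  then have "0 < bH'" "0 < bL'" "bL' / gL < bH' / gH"
    using assms(1,2) \<open>0 < k\<close> unfolding bH'_def bL'_def k_def[symmetric] by (simp_all add: ac_simps)
  moreover have "spectral_radius (matrix_inv D ** (B + M)) \<le> 1 \<longleftrightarrow>
      bH' \<le> gH + qHL \<and> bL' \<le> gL + qLH \<and> qLH * qHL \<le> (gH + qHL - bH') * (gL + qLH - bL')"
    unfolding B_def D_def M_def
    using spectral_radius_threshold_iff[of "gH + qHL" "gL + qLH" bH' bL' qLH qHL]
      assms(3,4,7,8) \<open>0 < bH'\<close> \<open>0 < bL'\<close>
    by simp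
  ultimately show ?thesis
    using bivirus_gas_iff_threshold[of bH' bL' gH gL qHL qLH] assms(3,4,7,8) by simp
qed

end
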